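(* For every $n\ge4$, $\mathbf{M}_n$ is firm and minimally non-superfirm, and $\mathbf{M}_n^{\{(n,n)\}}$ is a minimally non-firm generalised binary matrix.
   Context: A generalised binary matrix has entries in $\{0,1,?\}$; for such $\mathbf{Y}$, $\mathrm{supp}(\mathbf{Y})=\{(i,j):y_{i,j}=1\}$. A submatrix is obtained by deleting rows and columns; it is proper if it omits at least one row or column. A rectangle of $\mathbf{Y}$ is a set $I\times J$ of positions containing no $0$ entry. An isolated set is a subset of $\mathrm{supp}(\mathbf{Y})$ no two distinct elements of which lie in a common rectangle; $i(\mathbf{Y})$ is its maximum size; $br(\mathbf{Y})$ is the minimum number of rectangles whose union contains $\mathrm{supp}(\mathbf{Y})$ ($?$ entries need not be covered). $\mathbf{Y}$ is firm if $i(\mathbf{Y}')=br(\mathbf{Y}')$ for every submatrix $\mathbf{Y}'$ including $\mathbf{Y}$; minimally non-firm if $i(\mathbf{Y})<br(\mathbf{Y})$ and $i(\mathbf{Y}')=br(\mathbf{Y}')$ for all proper submatrices $\mathbf{Y}'$. For a binary $\mathbf{X}$ and $P\subseteq\mathrm{supp}(\mathbf{X})$, $\mathbf{X}^P$ is obtained by replacing the entries in $P$ by $?$. The rectangle cover graph $\mathcal{G}(\mathbf{X})$ has vertex set $\mathrm{supp}(\mathbf{X})$, two vertices adjacent iff a rectangle contains both; $\mathbf{X}$ is superfirm if $\mathcal{G}(\mathbf{X})$ is perfect, and minimally non-superfirm if it is not superfirm but all proper submatrices are superfirm. For $t\ge3$, $\mathbf{C}_t\in\{0,1\}^{t\times t}$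 has $1$s exactly at $(i,i),(i,i+1)$ for $i\in[t-1]$ and at $(t,1),(t,t)$. For $n\ge4$, $\mathbf{M}_n\in\{0,1\}^{n\times n}$ has top-left $(n-1)\times(n-1)$ block $\mathbf{C}_{n-1}$, entries $(n-1,n)$, $(n,n-1)$, $(n,n)$ equal to $1$, and all other entries in row $n$ and column $n$ equal to $0$ (i.e. $\mathbf{M}_n$ is obtained from $\mathbf{C}_{n-1}$ by stretching its $1$ at $(n-1,n-1)$). *)

theory Defs
  imports Main
begin

text \<open>A generalised binary matrix is given by a finite row index set R, a finite column
index set C (subsets of nat, 1-based) and an entry function. Submatrices are obtained by
restricting to subsets R' of R and C' of C (deleting rows/columns).\<close>

datatype entry = Zero | One | Qm

type_synonym gmat = "nat \<Rightarrow> nat \<Rightarrow> entry"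

definition supp :: "nat set \<Rightarrow> nat set \<Rightarrow> gmat \<Rightarrow> (nat \<times> nat) set" where
  "supp R C Y = {(i,j). i \<in> R \<and> j \<in> C \<and> Y i j = One}"

definition is_rect :: "nat set \<Rightarrow> nat set \<Rightarrow> gmat \<Rightarrow> nat set \<Rightarrow> nat set \<Rightarrow> bool" where
  "is_rect R C Y I J \<longleftrightarrow> I \<subseteq> R \<and> J \<subseteq> C \<and> (\<forall>i\<in>I. \<forall>j\<in>J. Y i j \<noteq> Zero)"

definition isolated :: "nat set \<Rightarrow> nat set \<Rightarrow> gmat \<Rightarrow> (nat \<times> nat) set \<Rightarrow> bool" where
  "isolated R C Y S \<longleftrightarrow> S \<subseteq> supp R C Y \<and>
     (\<forall>p\<in>S. \<forall>q\<in>S. p \<noteq> q \<longrightarrow> \<not> (\<exists>I J. is_rect R C Y I J \<and> p \<in> I \<times> J \<and> q \<in> I \<times> J))"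

definition iso_num :: "nat set \<Rightarrow> nat set \<Rightarrow> gmat \<Rightarrow> nat" where
  "iso_num R C Y = Max {card S | S. isolated R C Y S}"

definition rect_cover :: "nat set \<Rightarrow> nat set \<Rightarrow> gmat \<Rightarrow> (nat set \<times> nat set) set \<Rightarrow> bool" where
  "rect_cover R C Y F \<longleftrightarrow> finite F \<and> (\<forall>(I,J)\<in>F. is_rect R C Y I J) \<and>
     supp R C Y \<subseteq> (\<Union>(I,J)\<in>F. I \<times> J)"

definition br :: "nat set \<Rightarrow> nat set \<Rightarrow> gmat \<Rightarrow> nat" where
  "br R C Y = (LEAST k. \<exists>F. rect_cover R C Y F \<and> card F = k)"

definition firm :: "nat set \<Rightarrow> nat set \<Rightarrow> gmat \<Rightarrow> bool" where
  "firm R C Y \<longleftrightarrow> (\<forall>R' C'. R' \<subseteq> R \<longrightarrow> C' \<subseteq> C \<longrightarrow> iso_num R' C' Y = br R' C' Y)"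

definition min_non_firm :: "nat set \<Rightarrow> nat set \<Rightarrow> gmat \<Rightarrow> bool" where
  "min_non_firm R C Y \<longleftrightarrow> iso_num R C Y < br R C Y \<and>
     (\<forall>R' C'. R' \<subseteq> R \<longrightarrow> C' \<subseteq> C \<longrightarrow> (R', C') \<noteq> (R, C) \<longrightarrow> iso_num R' C' Y = br R' C' Y)"

definition clique_num :: "'a set \<Rightarrow> ('a \<Rightarrow> 'a \<Rightarrow> bool) \<Rightarrow> nat" where
  "clique_num V E = Max {card K | K. K \<subseteq> V \<and> (\<forall>x\<in>K. \<forall>y\<in>K. x \<noteq> y \<longrightarrow> E x y)}"

definition chrom_num :: "'a set \<Rightarrow> ('a \<Rightarrow> 'a \<Rightarrow> bool) \<Rightarrow> nat" where
  "chrom_num V E = (LEAST k. \<exists>f :: 'a \<Rightarrow> nat. (\<forall>x\<in>V. f x < k) \<and>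
      (\<forall>x\<in>V. \<forall>y\<in>V. x \<noteq> y \<longrightarrow> E x y \<longrightarrow> f x \<noteq> f y))"

definition perfect :: "'a set \<Rightarrow> ('a \<Rightarrow> 'a \<Rightarrow> bool) \<Rightarrow> bool" where
  "perfect V E \<longleftrightarrow> (\<forall>W. W \<subseteq> V \<longrightarrow> chrom_num W E = clique_num W E)"

definition rc_adj :: "nat set \<Rightarrow> nat set \<Rightarrow> gmat \<Rightarrow> nat \<times> nat \<Rightarrow> nat \<times> nat \<Rightarrow> bool" where
  "rc_adj R C X p q \<longleftrightarrow> p \<noteq> q \<and> (\<exists>I J. is_rect R C X I J \<and> p \<in> I \<times> J \<and> q \<in> I \<times> J)"

definition superfirm :: "nat set \<Rightarrow> nat set \<Rightarrow> gmat \<Rightarrow> bool" where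
  "superfirm R C X \<longleftrightarrow> perfect (supp R C X) (rc_adj R C X)"

definition min_non_superfirm :: "nat set \<Rightarrow> nat set \<Rightarrow> gmat \<Rightarrow> bool" where
  "min_non_superfirm R C X \<longleftrightarrow> \<not> superfirm R C X \<and>
     (\<forall>R' C'. R' \<subseteq> R \<longrightarrow> C' \<subseteq> C \<longrightarrow> (R', C') \<noteq> (R, C) \<longrightarrow> superfirm R' C' X)"

definition binary :: "nat set \<Rightarrow> nat set \<Rightarrow> gmat \<Rightarrow> bool" where
  "binary R C X \<longleftrightarrow> (\<forall>i\<in>R. \<forall>j\<in>C. X i j \<noteq> Qm)"

text \<open>X^P: replace the entries in P by ?.\<close>
definition qmark :: "gmat \<Rightarrow> (nat \<times> nat) set \<Rightarrow> gmat" where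
  "qmark X P = (\<lambda>i j. if (i,j) \<in> P then Qm else X i j)"

definition Cmat :: "nat \<Rightarrow> gmat" where
  "Cmat t = (\<lambda>i j. if (1 \<le> i \<and> i < t \<and> (j = i \<or> j = i + 1)) \<or> (i = t \<and> (j = 1 \<or> j = t))
                   then One else Zero)"

definition Mmat :: "nat \<Rightarrow> gmat" where
  "Mmat n = (\<lambda>i j. if i \<le> n - 1 \<and> j \<le> n - 1 then Cmat (n - 1) i j
                   else if (i, j) \<in> {(n - 1, n), (n, n - 1), (n, n)} then One else Zero)"

end

theory Submission
  imports Defs
begin

text \<open>Write n = k + 4. In the rectangle cover graph of M_n, the 2n - 1 ones other than
  (n-1,n-1) and (n,n) form an odd hole, and any rectangle contains at most two of them. So in
  M_n with (n,n) replaced by ? at least n rectangles are needed, while (n-1,n-1) is adjacent to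
  four hole positions and an isolated set has at most n - 1 elements. Every proper submatrix misses
  part of the hole; repeatedly deleting a simplicial position (one whose neighbours all share a
  rectangle with it) then leaves C_{n-1}, possibly with one of the two stretched entries, where the
  isolated diagonal matches a cover by rows or columns and an explicit colouring is optimal. For
  M_n itself, (n,n) is simplicial via the 2 x 2 block in the corner, and deleting that block
  destroys the hole.\<close>

definition nonzero :: "gmat \<Rightarrow> (nat \<times> nat) set" where
  "nonzero Y = {(i,j). Y i j \<noteq> Zero}"

definition rect_adj :: "('a \<times> 'b) set \<Rightarrow> 'a \<times> 'b \<Rightarrow> 'a \<times> 'b \<Rightarrow> bool" where
  "rect_adj V p q \<longleftrightarrow> p \<in> V \<and> q \<in> V \<and> (fst p, snd q) \<in> V \<and> (fst q, snd p) \<in> V"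

definition rect_edge :: "('a \<times> 'b) set \<Rightarrow> 'a \<times> 'b \<Rightarrow> 'a \<times> 'b \<Rightarrow> bool" where
  "rect_edge V p q \<longleftrightarrow> p \<noteq> q \<and> rect_adj V p q"

definition rect_independent :: "('a \<times> 'b) set \<Rightarrow> ('a \<times> 'b) set \<Rightarrow> bool" where
  "rect_independent V T \<longleftrightarrow> (\<forall>p\<in>T. \<forall>q\<in>T. p \<noteq> q \<longrightarrow> \<not> rect_adj V p q)"

lemma rect_adj_commute: "rect_adj V p q = rect_adj V q p"
  by (auto simp: rect_adj_def)

lemma common_rect_iff_rect_adj:
  assumes "p \<in> R \<times> C" "q \<in> R \<times> C"
  shows "(\<exists>I J. is_rect R C Y I J \<and> p \<in> I \<times> J \<and> q \<in> I \<times> J) \<longleftrightarrow> rect_adj (nonzero Y) p q"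
proof
  assume "\<exists>I J. is_rect R C Y I J \<and> p \<in> I \<times> J \<and> q \<in> I \<times> J"
  then show "rect_adj (nonzero Y) p q"
    by (cases p, cases q) (auto simp: is_rect_def rect_adj_def nonzero_def)
next
  assume "rect_adj (nonzero Y) p q"
  then have "is_rect R C Y {fst p, fst q} {snd p, snd q}"
    using assms by (cases p, cases q) (auto simp: is_rect_def rect_adj_def nonzero_def)
  moreover have "p \<in> {fst p, fst q} \<times> {snd p, snd q}" "q \<in> {fst p, fst q} \<times> {snd p, snd q}"
    by (cases p, cases q, auto)+
  ultimately show "\<exists>I J. is_rect R C Y I J \<and> p \<in> I \<times> J \<and> q \<in> I \<times> J"
    by (intro exI[of _ "{fst p, fst q}"] exI[of _ "{snd p, snd q}"] conjI)
qed

lemma supp_subset: "supp R C Y \<subseteq> R \<times> C"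
  by (auto simp: supp_def)

lemma finite_supp: "finite R \<Longrightarrow> finite C \<Longrightarrow> finite (supp R C Y)"
  using supp_subset[of R C Y] by (meson finite_SigmaI finite_subset)

lemma isolated_iff_rect_independent:
  "isolated R C Y S \<longleftrightarrow> S \<subseteq> supp R C Y \<and> rect_independent (nonzero Y) S"
proof (cases "S \<subseteq> supp R C Y")
  case True
  have "(\<exists>I J. is_rect R C Y I J \<and> p \<in> I \<times> J \<and> q \<in> I \<times> J) \<longleftrightarrow> rect_adj (nonzero Y) p q"
    if "p \<in> S" "q \<in> S" for p q
    using common_rect_iff_rect_adj[of p R C q Y] supp_subset[of R C Y] True that by (meson subsetD)
  then show ?thesis unfolding isolated_def rect_independent_def using True by simp
qed (simp add: isolated_def)

lemma rc_adj_eq_rect_edge: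
  assumes "p \<in> R \<times> C" "q \<in> R \<times> C"
  shows "rc_adj R C Y p q = rect_edge (nonzero Y) p q"
  using common_rect_iff_rect_adj[OF assms] unfolding rc_adj_def rect_edge_def by blast

lemma rect_cover_subset_nonzero:
  "rect_cover R C Y F \<Longrightarrow> (I,J) \<in> F \<Longrightarrow> I \<times> J \<subseteq> nonzero Y"
  unfolding rect_cover_def is_rect_def nonzero_def by fastforce

lemma card_isolated_le_card_cover:
  assumes "isolated R C Y T" "rect_cover R C Y F"
  shows "card T \<le> card F"
proof -
  have "\<exists>Q\<in>F. t \<in> fst Q \<times> snd Q" if "t \<in> T" for t
  proof -
    have "t \<in> (\<Union>(I,J)\<in>F. I \<times> J)"
      using that assms unfolding isolated_def rect_cover_def by blast
    then show ?thesis by force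
  qed
  then obtain g where g: "\<forall>t\<in>T. g t \<in> F \<and> t \<in> fst (g t) \<times> snd (g t)"
    by metis
  have rects: "\<forall>Q\<in>F. is_rect R C Y (fst Q) (snd Q)"
    using assms(2) unfolding rect_cover_def by auto
  \<comment> \<open>two points sharing a covering rectangle would lie in a common rectangle\<close>
  have "inj_on g T"
  proof (rule inj_onI, rule ccontr)
    fix s t assume st: "s \<in> T" "t \<in> T" "g s = g t" "s \<noteq> t"
    then have "is_rect R C Y (fst (g s)) (snd (g s))" "s \<in> fst (g s) \<times> snd (g s)"
      "t \<in> fst (g s) \<times> snd (g s)"
      using g rects by auto
    then show False using assms(1) st unfolding isolated_def by blast
  qed
  moreover have "g ` T \<subseteq> F" using g by blast
  moreover have "finite F" using assms(2) by (simp add: rect_cover_def)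
  ultimately show ?thesis by (meson card_inj_on_le)
qed

lemma iso_num_attained:
  assumes "finite R" "finite C"
  shows "\<exists>T. isolated R C Y T \<and> iso_num R C Y = card T"
    and "isolated R C Y T' \<Longrightarrow> card T' \<le> iso_num R C Y"
proof -
  let ?A = "{card S | S. isolated R C Y S}"
  have "?A \<subseteq> {..card (supp R C Y)}"
    using finite_supp[OF assms] by (auto simp: isolated_def intro: card_mono)
  then have fin: "finite ?A" using finite_subset by blast
  have "isolated R C Y {}" by (simp add: isolated_def)
  then have ne: "?A \<noteq> {}" by blast
  show "\<exists>T. isolated R C Y T \<and> iso_num R C Y = card T"
    using Max_in[OF fin ne] unfolding iso_num_def by auto
  show "isolated R C Y T' \<Longrightarrow> card T' \<le> iso_num R C Y"
    using Max_ge[OF fin] unfolding iso_num_def by blast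
qed

lemma br_attained:
  assumes "finite R" "finite C"
  shows "\<exists>F. rect_cover R C Y F \<and> card F = br R C Y"
    and "rect_cover R C Y F' \<Longrightarrow> br R C Y \<le> card F'"
proof -
  let ?F = "(\<lambda>(i,j). ({i},{j})) ` supp R C Y"
  have "rect_cover R C Y ?F"
    using finite_supp[OF assms] by (auto simp: rect_cover_def is_rect_def supp_def)
  then have ex: "\<exists>k F. rect_cover R C Y F \<and> card F = k" by blast
  show "\<exists>F. rect_cover R C Y F \<and> card F = br R C Y"
    unfolding br_def using LeastI_ex[OF ex] .
  show "rect_cover R C Y F' \<Longrightarrow> br R C Y \<le> card F'"
    unfolding br_def by (rule Least_le) blast
qed

lemma iso_num_le_br:
  assumes "finite R" "finite C"
  shows "iso_num R C Y \<le> br R C Y"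
  using iso_num_attained(1)[OF assms] br_attained(1)[OF assms] card_isolated_le_card_cover by metis

definition tight :: "('a \<times> 'b) set \<Rightarrow> ('a \<times> 'b) set \<Rightarrow> bool" where
  "tight V S \<longleftrightarrow> (\<exists>T F. T \<subseteq> S \<and> rect_independent V T \<and> finite F \<and>
     (\<forall>(I,J)\<in>F. I \<times> J \<subseteq> V) \<and> S \<subseteq> (\<Union>(I,J)\<in>F. I \<times> J) \<and> card F \<le> card T)"

lemma tight_empty: "tight V {}"
  unfolding tight_def rect_independent_def by (intro exI[of _ "{}"]) simp

lemma iso_num_eq_br_if_tight:
  assumes "finite R" "finite C" "tight (nonzero Y) (supp R C Y)"
  shows "iso_num R C Y = br R C Y"
proof -
  obtain T F where T: "T \<subseteq> supp R C Y" "rect_independent (nonzero Y) T"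
    and F: "finite F" "\<forall>(I,J)\<in>F. I \<times> J \<subseteq> nonzero Y" "supp R C Y \<subseteq> (\<Union>(I,J)\<in>F. I \<times> J)"
      "card F \<le> card T"
    using assms(3) unfolding tight_def by blast
  let ?F = "(\<lambda>(I,J). (I \<inter> R, J \<inter> C)) ` F"
  have "rect_cover R C Y ?F"
    unfolding rect_cover_def
  proof (intro conjI)
    show "finite ?F" using F(1) by simp
    show "\<forall>(I, J)\<in>?F. is_rect R C Y I J"
      using F(2) by (fastforce simp: is_rect_def nonzero_def)
    show "supp R C Y \<subseteq> (\<Union>(I, J)\<in>?F. I \<times> J)"
    proof
      fix p assume p: "p \<in> supp R C Y"
      then obtain I J where "(I,J) \<in> F" "p \<in> I \<times> J" using F(3) by blast
      moreover have "p \<in> R \<times> C" using p supp_subset by blast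
      ultimately show "p \<in> (\<Union>(I, J)\<in>?F. I \<times> J)" by force
    qed
  qed
  then have "br R C Y \<le> card ?F" using br_attained(2)[OF assms(1,2)] by blast
  also have "\<dots> \<le> card F" using F(1) card_image_le by blast
  also have "\<dots> \<le> card T" by fact
  also have "\<dots> \<le> iso_num R C Y"
    using T iso_num_attained(2)[OF assms(1,2)] isolated_iff_rect_independent by blast
  finally show ?thesis using iso_num_le_br[OF assms(1,2), of Y] by simp
qed

definition rect_simplicial :: "('a \<times> 'b) set \<Rightarrow> ('a \<times> 'b) set \<Rightarrow> 'a \<times> 'b \<Rightarrow> bool" where
  "rect_simplicial V S p \<longleftrightarrow>
     (\<exists>I J. I \<times> J \<subseteq> V \<and> p \<in> I \<times> J \<and> (\<forall>q\<in>S. rect_adj V p q \<longrightarrow> q \<in> I \<times> J))"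

lemma rect_simplicialI:
  assumes "I \<times> J \<subseteq> V" "(c,d) \<in> I \<times> J"
    "\<And>a b. (a,b) \<in> S \<Longrightarrow> (c,b) \<in> V \<Longrightarrow> (a,d) \<in> V \<Longrightarrow> (a,b) \<in> V \<Longrightarrow> a \<in> I \<and> b \<in> J"
  shows "rect_simplicial V S (c,d)"
  unfolding rect_simplicial_def
proof (intro exI conjI ballI impI)
  fix q assume "q \<in> S" "rect_adj V (c,d) q"
  then show "q \<in> I \<times> J" using assms(3)[of "fst q" "snd q"] by (cases q) (auto simp: rect_adj_def)
qed (fact assms)+

lemma rect_simplicial_row:
  assumes "(c,d) \<in> V" "\<And>a b. (a,b) \<in> S \<Longrightarrow> (c,b) \<in> V \<Longrightarrow> (a,d) \<in> V \<Longrightarrow> (a,b) \<in> V \<Longrightarrow> a = c"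
  shows "rect_simplicial V S (c,d)"
  by (rule rect_simplicialI[of "{c}" "{b. (c,b) \<in> V}"]) (use assms in auto)

lemma rect_simplicial_col:
  assumes "(c,d) \<in> V" "\<And>a b. (a,b) \<in> S \<Longrightarrow> (c,b) \<in> V \<Longrightarrow> (a,d) \<in> V \<Longrightarrow> (a,b) \<in> V \<Longrightarrow> b = d"
  shows "rect_simplicial V S (c,d)"
  by (rule rect_simplicialI[of "{a. (a,d) \<in> V}" "{d}"]) (use assms in auto)

text \<open>Removing the rectangle of a simplicial position: the position joins the independent set,
  the rectangle joins the cover.\<close>

lemma tight_if_simplicial:
  assumes "finite S" "p \<in> S" "I \<times> J \<subseteq> V" "p \<in> I \<times> J" "\<forall>q\<in>S. rect_adj V p q \<longrightarrow> q \<in> I \<times> J"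
    and "tight V (S - I \<times> J)"
  shows "tight V S"
proof -
  obtain T F where T: "T \<subseteq> S - I \<times> J" "rect_independent V T"
    and F: "finite F" "\<forall>(I,J)\<in>F. I \<times> J \<subseteq> V" "S - I \<times> J \<subseteq> (\<Union>(I,J)\<in>F. I \<times> J)" "card F \<le> card T"
    using assms(6) unfolding tight_def by blast
  have "\<not> rect_adj V p t" "\<not> rect_adj V t p" if "t \<in> T" for t
    using that T(1) assms(5) rect_adj_commute by blast+
  then have "rect_independent V (insert p T)"
    using T(2) unfolding rect_independent_def by blast
  moreover have "p \<notin> T" "finite T" using T(1) assms(1,4) finite_subset by auto
  then have "card (insert (I,J) F) \<le> card (insert p T)"
    using F(1,4) by (simp add: card_insert_if)
  moreover have "insert p T \<subseteq> S" using T(1) assms(2) by blast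
  moreover have "S \<subseteq> (\<Union>(I',J')\<in>insert (I,J) F. I' \<times> J')" using F(3) by blast
  moreover have "\<forall>(I',J')\<in>insert (I,J) F. I' \<times> J' \<subseteq> V" using F(2) assms(3) by blast
  ultimately show ?thesis
    unfolding tight_def using F(1) by (intro exI[of _ "insert p T"] exI[of _ "insert (I,J) F"]) simp
qed

definition colouring :: "'a set \<Rightarrow> ('a \<Rightarrow> 'a \<Rightarrow> bool) \<Rightarrow> nat \<Rightarrow> ('a \<Rightarrow> nat) \<Rightarrow> bool" where
  "colouring V E k f \<longleftrightarrow> (\<forall>x\<in>V. f x < k) \<and> (\<forall>x\<in>V. \<forall>y\<in>V. x \<noteq> y \<longrightarrow> E x y \<longrightarrow> f x \<noteq> f y)"

definition is_clique :: "'a set \<Rightarrow> ('a \<Rightarrow> 'a \<Rightarrow> bool) \<Rightarrow> bool" where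
  "is_clique K E \<longleftrightarrow> (\<forall>x\<in>K. \<forall>y\<in>K. x \<noteq> y \<longrightarrow> E x y)"

lemma chrom_num_eq_Least: "chrom_num V E = (LEAST k. \<exists>f. colouring V E k f)"
  by (simp add: chrom_num_def colouring_def)

lemma clique_num_eq_Max: "clique_num V E = Max {card K | K. K \<subseteq> V \<and> is_clique K E}"
  by (simp add: clique_num_def is_clique_def)

lemma colouring_mono: "k' \<le> k \<Longrightarrow> colouring V E k' f \<Longrightarrow> colouring V E k f"
  unfolding colouring_def by fastforce

lemma chrom_num_colouring:
  assumes "finite V"
  obtains f where "colouring V E (chrom_num V E) f"
proof -
  obtain h where "bij_betw h V {0..<card V}" using ex_bij_betw_finite_nat[OF assms] by blast
  then have "colouring V E (card V) h"
    unfolding colouring_def bij_betw_def inj_on_def by auto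
  then have "\<exists>f. colouring V E (LEAST k. \<exists>f. colouring V E k f) f"
    using LeastI_ex[of "\<lambda>k. \<exists>f. colouring V E k f"] by blast
  then show thesis using that unfolding chrom_num_eq_Least by blast
qed

lemma clique_num_attained:
  assumes "finite V"
  shows "\<exists>K. K \<subseteq> V \<and> is_clique K E \<and> card K = clique_num V E"
    and "K' \<subseteq> V \<Longrightarrow> is_clique K' E \<Longrightarrow> card K' \<le> clique_num V E"
proof -
  let ?A = "{card K | K. K \<subseteq> V \<and> is_clique K E}"
  have "?A \<subseteq> {..card V}" using assms by (auto intro: card_mono)
  then have fin: "finite ?A" using finite_subset by blast
  have "is_clique {} E" by (simp add: is_clique_def)
  then have ne: "?A \<noteq> {}" by blast
  show "\<exists>K. K \<subseteq> V \<and> is_clique K E \<and> card K = clique_num V E"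
    using Max_in[OF fin ne] unfolding clique_num_eq_Max by auto
  show "K' \<subseteq> V \<Longrightarrow> is_clique K' E \<Longrightarrow> card K' \<le> clique_num V E"
    using Max_ge[OF fin] unfolding clique_num_eq_Max by blast
qed

lemma clique_num_mono:
  assumes "finite V" "W \<subseteq> V"
  shows "clique_num W E \<le> clique_num V E"
proof -
  have "finite W" using assms finite_subset by blast
  then obtain K where "K \<subseteq> W" "is_clique K E" "card K = clique_num W E"
    using clique_num_attained(1) by blast
  then show ?thesis using clique_num_attained(2)[OF assms(1), of K E] assms(2) by simp
qed

lemma card_clique_le_colours:
  assumes "K \<subseteq> V" "is_clique K E" "colouring V E k f"
  shows "card K \<le> k"
proof -
  have "inj_on f K" using assms unfolding inj_on_def colouring_def is_clique_def by blast
  moreover have "f ` K \<subseteq> {..<k}" using assms unfolding colouring_def by auto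
  ultimately show ?thesis by (metis card_inj_on_le card_lessThan finite_lessThan)
qed

lemma chrom_num_eq_clique_num:
  assumes "finite V" "colouring V E (clique_num V E) f"
  shows "chrom_num V E = clique_num V E"
proof -
  have "chrom_num V E \<le> clique_num V E"
    unfolding chrom_num_eq_Least using assms(2) by (intro Least_le) blast
  moreover obtain g where g: "colouring V E (chrom_num V E) g"
    using chrom_num_colouring[OF assms(1)] .
  moreover obtain K where "K \<subseteq> V" "is_clique K E" "card K = clique_num V E"
    using clique_num_attained(1)[OF assms(1)] by blast
  then have "clique_num V E \<le> chrom_num V E" using card_clique_le_colours[OF _ _ g] by metis
  ultimately show ?thesis by simp
qed

lemma chrom_num_gt:
  assumes "finite V" "\<And>f. \<not> colouring V E k f"
  shows "k < chrom_num V E"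
proof (rule ccontr)
  assume "\<not> k < chrom_num V E"
  moreover obtain g where "colouring V E (chrom_num V E) g"
    using chrom_num_colouring[OF assms(1)] .
  ultimately show False using assms(2) colouring_mono[of "chrom_num V E" k] by force
qed

lemma chrom_num_cong:
  assumes "\<And>x y. x \<in> V \<Longrightarrow> y \<in> V \<Longrightarrow> E x y = E' x y"
  shows "chrom_num V E = chrom_num V E'"
proof -
  have "colouring V E k f = colouring V E' k f" for k f
    using assms unfolding colouring_def by auto
  then have "colouring V E = colouring V E'" by (intro ext)
  then show ?thesis unfolding chrom_num_eq_Least by simp
qed

lemma clique_num_cong:
  assumes "\<And>x y. x \<in> V \<Longrightarrow> y \<in> V \<Longrightarrow> E x y = E' x y"
  shows "clique_num V E = clique_num V E'"
proof -
  have "K \<subseteq> V \<and> is_clique K E \<longleftrightarrow> K \<subseteq> V \<and> is_clique K E'" for K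
    using assms unfolding is_clique_def by blast
  then show ?thesis unfolding clique_num_eq_Max by simp
qed

text \<open>A simplicial vertex, whose closed neighbourhood is a clique, sees fewer than
  clique-number many colours, so an optimal colouring of the rest extends.\<close>

lemma colouring_insert_simplicial:
  assumes "finite V" "p \<in> V" "is_clique (insert p {q \<in> V. E p q \<or> E q p}) E"
    and "colouring (V - {p}) E (clique_num (V - {p}) E) f"
  shows "\<exists>g. colouring V E (clique_num V E) g"
proof -
  let ?w = "clique_num V E"
  let ?N = "{q \<in> V - {p}. E p q \<or> E q p}"
  have fin: "finite ?N" using assms(1) by simp
  have "insert p ?N \<subseteq> V" using assms(2) by blast
  moreover have "is_clique (insert p ?N) E"
    using assms(3) unfolding is_clique_def by blast
  ultimately have "card (insert p ?N) \<le> ?w" using clique_num_attained(2)[OF assms(1)] by blast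
  then have small: "card (f ` ?N) < ?w" using card_image_le[OF fin, of f] fin by simp
  have "\<not> {..<?w} \<subseteq> f ` ?N"
  proof
    assume "{..<?w} \<subseteq> f ` ?N"
    then have "card {..<?w} \<le> card (f ` ?N)" using fin by (intro card_mono) auto
    then show False using small by simp
  qed
  then obtain c where c: "c < ?w" "c \<notin> f ` ?N" by auto
  have "clique_num (V - {p}) E \<le> ?w" using clique_num_mono[OF assms(1)] by blast
  have "colouring V E ?w (f(p := c))"
    unfolding colouring_def
  proof (intro conjI ballI impI)
    fix x assume "x \<in> V"
    then show "(f(p := c)) x < ?w"
      using c(1) assms(4) \<open>clique_num (V - {p}) E \<le> ?w\<close> unfolding colouring_def
      by (cases "x = p") (auto intro: less_le_trans)
  next
    fix x y assume xy: "x \<in> V" "y \<in> V" "x \<noteq> y" "E x y"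
    then have "x \<noteq> p \<Longrightarrow> y \<noteq> p \<Longrightarrow> f x \<noteq> f y" using assms(4) unfolding colouring_def by blast
    moreover have "x = p \<Longrightarrow> f y \<noteq> c" "y = p \<Longrightarrow> f x \<noteq> c" using xy c(2) by auto
    ultimately show "(f(p := c)) x \<noteq> (f(p := c)) y" using xy(3) by auto
  qed
  then show ?thesis by blast
qed

lemma rect_is_clique: "I \<times> J \<subseteq> V \<Longrightarrow> K \<subseteq> I \<times> J \<Longrightarrow> is_clique K (rect_edge V)"
  unfolding is_clique_def rect_edge_def rect_adj_def by (auto simp: subset_iff mem_Times_iff)

lemma card_rect_le_clique_num:
  assumes "finite S" "I \<times> J \<subseteq> V" "I \<times> J \<subseteq> S"
  shows "card (I \<times> J) \<le> clique_num S (rect_edge V)"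
  using clique_num_attained(2)[OF assms(1,3)] rect_is_clique[OF assms(2) subset_refl] by blast

lemma chrom_num_rc_adj:
  "W \<subseteq> R \<times> C \<Longrightarrow> chrom_num W (rc_adj R C Y) = chrom_num W (rect_edge (nonzero Y))"
  by (rule chrom_num_cong) (use rc_adj_eq_rect_edge in blast)

lemma clique_num_rc_adj:
  "W \<subseteq> R \<times> C \<Longrightarrow> clique_num W (rc_adj R C Y) = clique_num W (rect_edge (nonzero Y))"
  by (rule clique_num_cong) (use rc_adj_eq_rect_edge in blast)

lemma colouring_if_rect_simplicial:
  assumes "finite S" "p \<in> S" "rect_simplicial V S p"
    and "colouring (S - {p}) (rect_edge V) (clique_num (S - {p}) (rect_edge V)) f"
  shows "\<exists>g. colouring S (rect_edge V) (clique_num S (rect_edge V)) g"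
proof (rule colouring_insert_simplicial[OF assms(1,2) _ assms(4)])
  obtain I J where IJ: "I \<times> J \<subseteq> V" "p \<in> I \<times> J" "\<forall>q\<in>S. rect_adj V p q \<longrightarrow> q \<in> I \<times> J"
    using assms(3) unfolding rect_simplicial_def by blast
  then have "insert p {q \<in> S. rect_edge V p q \<or> rect_edge V q p} \<subseteq> I \<times> J"
    using rect_adj_commute unfolding rect_edge_def by blast
  then show "is_clique (insert p {q \<in> S. rect_edge V p q \<or> rect_edge V q p}) (rect_edge V)"
    by (rule rect_is_clique[OF IJ(1)])
qed

text \<open>Positions are indexed for n = k + 4, so that n \<ge> 4 holds by construction. Mones k is the
  support of M_n; Cones k is the support of C_{n-1}, sitting in its top-left corner; Mhole k
  omits the two diagonal positions (n-1,n-1) and (n,n) and is an odd hole of length 2n - 1 in the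
  rectangle cover graph.\<close>

definition Mones :: "nat \<Rightarrow> (nat \<times> nat) set" where
  "Mones k = {(a,b). (1 \<le> a \<and> a \<le> k+2 \<and> (b = a \<or> b = Suc a)) \<or>
     (a = k+3 \<and> (b = 1 \<or> b = k+3 \<or> b = k+4)) \<or> (a = k+4 \<and> (b = k+3 \<or> b = k+4))}"

definition Mhole :: "nat \<Rightarrow> (nat \<times> nat) set" where
  "Mhole k = Mones k - {(k+3,k+3), (k+4,k+4)}"

definition Cones :: "nat \<Rightarrow> (nat \<times> nat) set" where
  "Cones k = Mones k - {(k+3,k+4), (k+4,k+3), (k+4,k+4)}"

lemma finite_Mones: "finite (Mones k)"
proof -
  have "Mones k \<subseteq> {0..k+4} \<times> {0..k+4}" by (auto simp: Mones_def)
  then show ?thesis using finite_subset by blast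
qed

lemma finite_Mhole: "finite (Mhole k)"
  unfolding Mhole_def using finite_Mones by blast

lemma Mones_cases:
  "(a,b) \<in> Mones k \<Longrightarrow> (1 \<le> a \<and> a \<le> k+2 \<and> b = a) \<or> (1 \<le> a \<and> a \<le> k+2 \<and> b = Suc a) \<or>
     (a = k+3 \<and> b = 1) \<or> (a = k+3 \<and> b = k+3) \<or> (a = k+3 \<and> b = k+4) \<or>
     (a = k+4 \<and> b = k+3) \<or> (a = k+4 \<and> b = k+4)"
  unfolding Mones_def by auto

lemma Mones_row_cases: "(a,b) \<in> Mones k \<Longrightarrow> (1 \<le> a \<and> a \<le> k+2) \<or> a = k+3 \<or> a = k+4"
  unfolding Mones_def by auto

lemma Mones_row_low: "1 \<le> a \<Longrightarrow> a \<le> k+2 \<Longrightarrow> (a,b) \<in> Mones k \<Longrightarrow> b = a \<or> b = Suc a"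
  unfolding Mones_def by auto

lemma Mones_row_k3: "(k+3,b) \<in> Mones k \<Longrightarrow> b = 1 \<or> b = k+3 \<or> b = k+4"
  unfolding Mones_def by auto

lemma Mones_row_k4: "(k+4,b) \<in> Mones k \<Longrightarrow> b = k+3 \<or> b = k+4"
  unfolding Mones_def by auto

lemma Mones_col_k4: "(a,k+4) \<in> Mones k \<Longrightarrow> a = k+3 \<or> a = k+4"
  unfolding Mones_def by auto

lemma corner_block_subset: "{k+3,k+4} \<times> {k+3,k+4} \<subseteq> Mones k"
  by (auto simp: Mones_def)

lemma simplicial_corner: "rect_simplicial (Mones k) S (k+4,k+4)"
  by (rule rect_simplicialI[OF corner_block_subset]) (auto simp: Mones_def)

lemma simplicial_diag_right:
  "1 \<le> i \<Longrightarrow> i \<le> k+2 \<Longrightarrow> (i, Suc i) \<notin> S \<Longrightarrow> rect_simplicial (Mones k) S (i,i)"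
  by (rule rect_simplicial_col) (auto simp: Mones_def)

lemma simplicial_diag_above:
  "2 \<le> i \<Longrightarrow> i \<le> k+2 \<Longrightarrow> (i-1, i) \<notin> S \<Longrightarrow> rect_simplicial (Mones k) S (i,i)"
  by (rule rect_simplicial_row) (auto simp: Mones_def)

lemma simplicial_diag_first: "(k+3, 1) \<notin> S \<Longrightarrow> rect_simplicial (Mones k) S (1,1)"
  by (rule rect_simplicial_row) (auto simp: Mones_def)

lemma simplicial_superdiag_left:
  "1 \<le> i \<Longrightarrow> i \<le> k+1 \<Longrightarrow> (i, i) \<notin> S \<Longrightarrow> rect_simplicial (Mones k) S (i, Suc i)"
  by (rule rect_simplicial_col) (auto simp: Mones_def)

lemma simplicial_superdiag_below:
  "1 \<le> i \<Longrightarrow> i \<le> k+1 \<Longrightarrow> (Suc i, Suc i) \<notin> S \<Longrightarrow> rect_simplicial (Mones k) S (i, Suc i)"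
  by (rule rect_simplicial_row) (auto simp: Mones_def)

lemma simplicial_last_superdiag_left: "(k+2,k+2) \<notin> S \<Longrightarrow> rect_simplicial (Mones k) S (k+2, k+3)"
  by (rule rect_simplicial_col) (auto simp: Mones_def)

lemma simplicial_last_superdiag_below:
  "(k+3,k+3) \<notin> S \<Longrightarrow> (k+4,k+3) \<notin> S \<Longrightarrow> rect_simplicial (Mones k) S (k+2, k+3)"
  by (rule rect_simplicial_row) (auto simp: Mones_def)

lemma simplicial_wrap_row: "(1,1) \<notin> S \<Longrightarrow> rect_simplicial (Mones k) S (k+3, 1)"
  by (rule rect_simplicial_row) (auto simp: Mones_def)

lemma simplicial_wrap_col:
  assumes "(k+3,k+3) \<notin> S" "(k+3,k+4) \<notin> S"
  shows "rect_simplicial (Mones k) S (k+3, 1)"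
proof (rule rect_simplicial_col)
  show "(k+3, 1) \<in> Mones k" by (simp add: Mones_def)
  fix a b assume h: "(a, b) \<in> S" "(k+3, b) \<in> Mones k" "(a, 1) \<in> Mones k" "(a, b) \<in> Mones k"
  have "b = 1 \<or> b = k+3 \<or> b = k+4" using h(2) by (auto simp: Mones_def)
  moreover have "a = 1 \<or> a = k+3" using h(3) by (auto simp: Mones_def)
  ultimately show "b = 1" using h(1,4) assms by (auto simp: Mones_def)
qed

lemma simplicial_stretch_right: "(k+3,1) \<notin> S \<Longrightarrow> rect_simplicial (Mones k) S (k+3, k+4)"
  by (rule rect_simplicialI[OF corner_block_subset]) (auto simp: Mones_def)

lemma simplicial_stretch_below: "(k+2,k+3) \<notin> S \<Longrightarrow> rect_simplicial (Mones k) S (k+4, k+3)"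
  by (rule rect_simplicialI[OF corner_block_subset]) (auto simp: Mones_def)

lemma simplicial_stretched_diag:
  "(k+2,k+3) \<notin> S \<Longrightarrow> (k+3,1) \<notin> S \<Longrightarrow> rect_simplicial (Mones k) S (k+3, k+3)"
  by (rule rect_simplicialI[OF corner_block_subset]) (auto simp: Mones_def)

lemma no_simplicial_superdiag_iff_diag:
  assumes ns: "\<forall>p\<in>S. \<not> rect_simplicial (Mones k) S p" and i: "1 \<le> i" "i \<le> k+2"
  shows "(i, Suc i) \<in> S \<longleftrightarrow> (i,i) \<in> S"
proof
  assume sd: "(i, Suc i) \<in> S"
  show "(i,i) \<in> S"
  proof (cases "i = k+2")
    case True
    then show ?thesis using simplicial_last_superdiag_left[of k S] ns sd by (auto simp: eval_nat_numeral)
  next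
    case False
    then show ?thesis using simplicial_superdiag_left[of i k S] i ns sd by auto
  qed
next
  assume "(i,i) \<in> S"
  then show "(i, Suc i) \<in> S" using simplicial_diag_right[OF i] ns by blast
qed

lemma no_simplicial_diag_iff_first:
  assumes ns: "\<forall>p\<in>S. \<not> rect_simplicial (Mones k) S p" and "1 \<le> i" "i \<le> k+2"
  shows "(i,i) \<in> S \<longleftrightarrow> (1,1) \<in> S"
  using assms(2,3)
proof (induction i)
  case 0
  then show ?case by simp
next
  case (Suc i)
  show ?case
  proof (cases "i = 0")
    case True
    then show ?thesis by simp
  next
    case False
    then have "(Suc i, Suc i) \<in> S \<longleftrightarrow> (i, Suc i) \<in> S"
      using simplicial_superdiag_below[of i k S] simplicial_diag_above[of "Suc i" k S] ns Suc.prems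
      by auto
    also have "\<dots> \<longleftrightarrow> (i,i) \<in> S"
      using no_simplicial_superdiag_iff_diag[OF ns] False Suc.prems by simp
    also have "\<dots> \<longleftrightarrow> (1,1) \<in> S"
      using Suc.IH False Suc.prems by simp
    finally show ?thesis .
  qed
qed

text \<open>Without simplicial positions, membership propagates around the cycle C_{n-1}, so S
  is all of it or avoids it; the remaining positions are then forced one by one.\<close>

lemma no_simplicial_cases:
  assumes S: "S \<subseteq> Mones k" "\<not> Mhole k \<subseteq> S" "S \<noteq> {}"
    and ns: "\<forall>p\<in>S. \<not> rect_simplicial (Mones k) S p"
  shows "S = Cones k \<or> S = insert (k+3,k+4) (Cones k) \<or> S = insert (k+4,k+3) (Cones k)"
proof -
  have corner: "(k+4,k+4) \<notin> S" using simplicial_corner ns by blast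
  have stretch: "(k+3,k+4) \<in> S \<Longrightarrow> (k+3,1) \<in> S" "(k+4,k+3) \<in> S \<Longrightarrow> (k+2,k+3) \<in> S"
    using simplicial_stretch_right simplicial_stretch_below ns by blast+
  have path: "(i,i) \<in> S \<longleftrightarrow> (1,1) \<in> S" "(i, Suc i) \<in> S \<longleftrightarrow> (1,1) \<in> S"
    if "1 \<le> i" "i \<le> k+2" for i
    using no_simplicial_diag_iff_first[OF ns that] no_simplicial_superdiag_iff_diag[OF ns that]
    by blast+
  have last: "(k+2,k+3) \<in> S \<longleftrightarrow> (1,1) \<in> S"
    using path(2)[of "k+2"] by (simp add: eval_nat_numeral)
  show ?thesis
  proof (cases "(1,1) \<in> S")
    case True
    then have path: "(i,i) \<in> S" "(i, Suc i) \<in> S" if "1 \<le> i" "i \<le> k+2" for i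
      using path that by blast+
    have wrap: "(k+3,1) \<in> S" using simplicial_diag_first True ns by blast
    have sub: "Cones k - {(k+3,k+3)} \<subseteq> S"
    proof
      fix p assume p: "p \<in> Cones k - {(k+3,k+3)}"
      obtain a b where ab: "p = (a,b)" by (cases p)
      from p ab have "(1 \<le> a \<and> a \<le> k+2 \<and> (b = a \<or> b = Suc a)) \<or> (a = k+3 \<and> b = 1)"
        by (auto simp: Cones_def Mones_def)
      then show "p \<in> S" using path True wrap ab by auto
    qed
    have hole: "Mhole k \<subseteq> (Cones k - {(k+3,k+3)}) \<union> {(k+3,k+4), (k+4,k+3)}"
      by (auto simp: Mhole_def Cones_def)
    show ?thesis
    proof (cases "(k+3,k+3) \<in> S")
      case True
      have "Cones k \<subseteq> S" using sub True by blast
      moreover have "S \<subseteq> Cones k \<union> {(k+3,k+4), (k+4,k+3)}"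
        using S(1) corner by (auto simp: Cones_def)
      moreover have "\<not> ((k+3,k+4) \<in> S \<and> (k+4,k+3) \<in> S)" using hole sub S(2) by blast
      ultimately show ?thesis by blast
    next
      case False
      have "(k+3,k+4) \<in> S" using simplicial_wrap_col[OF False] wrap ns by blast
      moreover have "(k+4,k+3) \<in> S"
        using simplicial_last_superdiag_below[OF False] last True ns by blast
      ultimately show ?thesis using hole sub S(2) by blast
    qed
  next
    case False
    then have path: "(i,i) \<notin> S" "(i, Suc i) \<notin> S" if "1 \<le> i" "i \<le> k+2" for i
      using path that by blast+
    have wrap: "(k+3,1) \<notin> S" using simplicial_wrap_row False ns by blast
    have "S \<subseteq> {(k+3,k+3)}"
    proof
      fix p assume p: "p \<in> S"
      obtain a b where ab: "p = (a,b)" by (cases p)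
      then have "(a,b) \<in> Mones k" using S(1) p by blast
      from Mones_cases[OF this] show "p \<in> {(k+3,k+3)}"
        using path[of a] False last corner stretch wrap p ab by auto
    qed
    then have "S = {(k+3,k+3)}" using S(3) by blast
    then show ?thesis
      using simplicial_stretched_diag[of k S] last False wrap ns by blast
  qed
qed

lemma diag_not_rect_adj:
  assumes "(i,j) \<in> Mones k" "(j,i) \<in> Mones k" "i \<le> k+3" "j \<le> k+3"
  shows "i = j"
  using Mones_cases[OF assms(1)] Mones_cases[OF assms(2)] assms(3,4) by linarith

lemma Cones_off_diag:
  "(a,b) \<in> Cones k \<Longrightarrow> a \<noteq> b \<Longrightarrow> (1 \<le> a \<and> a \<le> k+2 \<and> b = Suc a) \<or> (a = k+3 \<and> b = 1)"
  unfolding Cones_def Mones_def by auto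

lemma off_diag_not_rect_adj:
  assumes "(a,b) \<in> Cones k" "(c,d) \<in> Cones k" "a \<noteq> b" "c \<noteq> d" "(a,d) \<in> Mones k" "(c,b) \<in> Mones k"
  shows "a = c \<and> b = d"
  using Cones_off_diag[OF assms(1,3)] Cones_off_diag[OF assms(2,4)]
proof (elim disjE conjE)
  assume h: "1 \<le> a" "a \<le> k+2" "b = Suc a" "1 \<le> c" "c \<le> k+2" "d = Suc c"
  show ?thesis using Mones_row_low[OF h(1,2) assms(5)] Mones_row_low[OF h(4,5) assms(6)] h by auto
next
  assume h: "1 \<le> a" "a \<le> k+2" "b = Suc a" "c = k+3" "d = 1"
  show ?thesis using Mones_row_low[OF h(1,2) assms(5)] Mones_row_k3[of k b] assms(6) h by auto
next
  assume h: "a = k+3" "b = 1" "1 \<le> c" "c \<le> k+2" "d = Suc c"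
  show ?thesis using Mones_row_low[OF h(3,4) assms(6)] Mones_row_k3[of k d] assms(5) h by auto
qed simp

definition Cdiag :: "nat \<Rightarrow> (nat \<times> nat) set" where
  "Cdiag k = (\<lambda>i. (i,i)) ` {1..k+3}"

lemma card_Cdiag: "card (Cdiag k) = k+3"
  unfolding Cdiag_def by (subst card_image) (auto simp: inj_on_def)

lemma Cdiag_subset: "Cdiag k \<subseteq> Cones k"
  by (auto simp: Cdiag_def Cones_def Mones_def)

lemma rect_independent_Cdiag: "rect_independent (Mones k) (Cdiag k)"
  unfolding rect_independent_def Cdiag_def rect_adj_def using diag_not_rect_adj by fastforce

text \<open>The diagonal of C_{n-1} is isolated, and n - 1 rows (columns) of M_n cover C_{n-1}
  together with (n-1,n) (with (n,n-1)).\<close>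

lemma tight_by_rows:
  assumes "S \<subseteq> insert (k+3,k+4) (Cones k)" "Cdiag k \<subseteq> S"
  shows "tight (Mones k) S"
proof -
  let ?F = "(\<lambda>i. ({i}, {b. (i,b) \<in> Mones k})) ` {1..k+3}"
  have "card ?F \<le> card {1..k+3}" by (rule card_image_le) simp
  then have "card ?F \<le> card (Cdiag k)" by (simp add: card_Cdiag)
  moreover have "S \<subseteq> (\<Union>(I,J)\<in>?F. I \<times> J)"
  proof
    fix p assume "p \<in> S"
    then obtain a b where "p = (a,b)" "(a,b) \<in> Mones k" "1 \<le> a" "a \<le> k+3"
      using assms(1) by (cases p) (auto simp: Cones_def Mones_def)
    then show "p \<in> (\<Union>(I,J)\<in>?F. I \<times> J)" by (intro UN_I[of "({a}, {b. (a,b) \<in> Mones k})"]) auto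
  qed
  moreover have "\<forall>(I,J)\<in>?F. I \<times> J \<subseteq> Mones k" by auto
  ultimately show ?thesis
    unfolding tight_def using assms(2) rect_independent_Cdiag
    by (intro exI[of _ "Cdiag k"] exI[of _ ?F]) simp
qed

lemma tight_by_cols:
  assumes "S \<subseteq> insert (k+4,k+3) (Cones k)" "Cdiag k \<subseteq> S"
  shows "tight (Mones k) S"
proof -
  let ?F = "(\<lambda>j. ({a. (a,j) \<in> Mones k}, {j})) ` {1..k+3}"
  have "card ?F \<le> card {1..k+3}" by (rule card_image_le) simp
  then have "card ?F \<le> card (Cdiag k)" by (simp add: card_Cdiag)
  moreover have "S \<subseteq> (\<Union>(I,J)\<in>?F. I \<times> J)"
  proof
    fix p assume "p \<in> S"
    then obtain a b where "p = (a,b)" "(a,b) \<in> Mones k" "1 \<le> b" "b \<le> k+3"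
      using assms(1) by (cases p) (auto simp: Cones_def Mones_def)
    then show "p \<in> (\<Union>(I,J)\<in>?F. I \<times> J)" by (intro UN_I[of "({a. (a,b) \<in> Mones k}, {b})"]) auto
  qed
  moreover have "\<forall>(I,J)\<in>?F. I \<times> J \<subseteq> Mones k" by auto
  ultimately show ?thesis
    unfolding tight_def using assms(2) rect_independent_Cdiag
    by (intro exI[of _ "Cdiag k"] exI[of _ ?F]) simp
qed

lemma tight_if_not_hole: "S \<subseteq> Mones k \<Longrightarrow> \<not> Mhole k \<subseteq> S \<Longrightarrow> tight (Mones k) S"
proof (induction "card S" arbitrary: S rule: less_induct)
  case less
  have fin: "finite S" using less.prems(1) finite_Mones finite_subset by blast
  consider "S = {}" | p where "p \<in> S" "rect_simplicial (Mones k) S p"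
    | "S \<noteq> {}" "\<forall>p\<in>S. \<not> rect_simplicial (Mones k) S p"
    by blast
  then show ?case
  proof cases
    case 1
    then show ?thesis by (simp add: tight_empty)
  next
    case (2 p)
    then obtain I J where IJ: "I \<times> J \<subseteq> Mones k" "p \<in> I \<times> J"
      "\<forall>q\<in>S. rect_adj (Mones k) p q \<longrightarrow> q \<in> I \<times> J"
      unfolding rect_simplicial_def by blast
    have "card (S - I \<times> J) < card S" using 2 IJ(2) fin by (intro psubset_card_mono) auto
    moreover have "S - I \<times> J \<subseteq> Mones k" "\<not> Mhole k \<subseteq> S - I \<times> J" using less.prems by blast+
    ultimately have "tight (Mones k) (S - I \<times> J)" by (rule less.hyps)
    then show ?thesis using tight_if_simplicial[OF fin 2(1) IJ] by blast
  next
    case 3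
    then have S: "S = Cones k \<or> S = insert (k+3,k+4) (Cones k) \<or> S = insert (k+4,k+3) (Cones k)"
      using no_simplicial_cases[OF less.prems] by blast
    then have "Cdiag k \<subseteq> S" using Cdiag_subset by blast
    moreover have "S \<subseteq> insert (k+3,k+4) (Cones k) \<or> S \<subseteq> insert (k+4,k+3) (Cones k)"
      using S by blast
    ultimately show ?thesis using tight_by_rows tight_by_cols by blast
  qed
qed

definition three_colouring :: "nat \<Rightarrow> nat \<times> nat \<Rightarrow> nat" where
  "three_colouring k p =
     (if p = (k+3,k+4) \<or> p = (k+4,k+3) then 2 else if fst p = snd p then 0 else 1)"

lemma Cones_diag_le: "(i,i) \<in> Cones k \<Longrightarrow> i \<le> k+3"
  unfolding Cones_def Mones_def by auto

lemma three_colouring_Cones: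
  assumes "p \<in> Cones k" "q \<in> Cones k" "rect_edge (Mones k) p q"
  shows "three_colouring k p \<noteq> three_colouring k q"
proof
  obtain a b c d where ab: "p = (a,b)" "q = (c,d)" by (cases p, cases q)
  have out: "p \<noteq> (k+3,k+4)" "p \<noteq> (k+4,k+3)" "q \<noteq> (k+3,k+4)" "q \<noteq> (k+4,k+3)"
    using assms(1,2) by (auto simp: Cones_def)
  have adj: "(a,d) \<in> Mones k" "(c,b) \<in> Mones k" "p \<noteq> q"
    using assms(3) ab by (auto simp: rect_edge_def rect_adj_def)
  assume eq: "three_colouring k p = three_colouring k q"
  show False
  proof (cases "a = b")
    case True
    then have "c = d" using eq out ab by (auto simp: three_colouring_def split: if_splits)
    then have "a = c"
      using diag_not_rect_adj[of a c k] adj True ab assms(1,2) Cones_diag_le by metis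
    then show False using True \<open>c = d\<close> ab adj(3) by simp
  next
    case False
    then have "c \<noteq> d" using eq out ab by (auto simp: three_colouring_def split: if_splits)
    then show False using off_diag_not_rect_adj[of a b k c d] ab assms(1,2) adj False by auto
  qed
qed

lemma three_colouring_Cones_less_2: "q \<in> Cones k \<Longrightarrow> three_colouring k q < 2"
  by (auto simp: Cones_def three_colouring_def)

lemma three_colouring_proper:
  assumes "S \<subseteq> insert (k+3,k+4) (Cones k) \<or> S \<subseteq> insert (k+4,k+3) (Cones k)"
  shows "colouring S (rect_edge (Mones k)) 3 (three_colouring k)"
  unfolding colouring_def
proof (intro conjI ballI impI)
  fix x assume "x \<in> S"
  show "three_colouring k x < 3" by (simp add: three_colouring_def)
next
  fix x y assume xy: "x \<in> S" "y \<in> S" "x \<noteq> y" "rect_edge (Mones k) x y"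
  have high: "three_colouring k q = 2" if "q \<in> S" "q \<notin> Cones k" for q
    using that assms by (auto simp: three_colouring_def)
  show "three_colouring k x \<noteq> three_colouring k y"
  proof (cases "x \<in> Cones k \<and> y \<in> Cones k")
    case True
    then show ?thesis using three_colouring_Cones xy(4) by blast
  next
    case False
    then have "(x \<notin> Cones k \<and> y \<in> Cones k) \<or> (x \<in> Cones k \<and> y \<notin> Cones k)"
      using xy(1-3) assms by blast
    then show ?thesis using high three_colouring_Cones_less_2 xy(1,2) by (metis less_irrefl)
  qed
qed

lemma optimal_colouring_cases:
  assumes "S = Cones k \<or> S = insert (k+3,k+4) (Cones k) \<or> S = insert (k+4,k+3) (Cones k)"
  shows "\<exists>g. colouring S (rect_edge (Mones k)) (clique_num S (rect_edge (Mones k))) g"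
proof -
  have fin: "finite S" using assms finite_Mones[of k] unfolding Cones_def by (auto intro: finite_subset)
  have col: "colouring S (rect_edge (Mones k)) 3 (three_colouring k)"
    using assms by (intro three_colouring_proper) blast
  from assms consider "S = Cones k" | "S = insert (k+3,k+4) (Cones k)" | "S = insert (k+4,k+3) (Cones k)"
    by blast
  then show ?thesis
  proof cases
    case 1
    have "card ({1::nat} \<times> {1,2::nat}) \<le> clique_num S (rect_edge (Mones k))"
      by (rule card_rect_le_clique_num[OF fin]) (auto simp: 1 Cones_def Mones_def)
    then have "2 \<le> clique_num S (rect_edge (Mones k))" by simp
    moreover have "colouring S (rect_edge (Mones k)) 2 (three_colouring k)"
      using col three_colouring_Cones_less_2 1 unfolding colouring_def by blast
    ultimately show ?thesis using colouring_mono by blast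
  next
    case 2
    have "card ({k+3} \<times> {1, k+3, k+4}) \<le> clique_num S (rect_edge (Mones k))"
      by (rule card_rect_le_clique_num[OF fin]) (auto simp: 2 Cones_def Mones_def)
    then have "3 \<le> clique_num S (rect_edge (Mones k))" by simp
    then show ?thesis using col colouring_mono by blast
  next
    case 3
    have "card ({k+2, k+3, k+4} \<times> {k+3}) \<le> clique_num S (rect_edge (Mones k))"
      by (rule card_rect_le_clique_num[OF fin]) (auto simp: 3 Cones_def Mones_def)
    then have "3 \<le> clique_num S (rect_edge (Mones k))" by simp
    then show ?thesis using col colouring_mono by blast
  qed
qed

lemma optimal_colouring_if_not_hole:
  "S \<subseteq> Mones k \<Longrightarrow> \<not> Mhole k \<subseteq> S \<Longrightarrow>
     \<exists>g. colouring S (rect_edge (Mones k)) (clique_num S (rect_edge (Mones k))) g"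
proof (induction "card S" arbitrary: S rule: less_induct)
  case less
  have fin: "finite S" using less.prems(1) finite_Mones finite_subset by blast
  consider "S = {}" | p where "p \<in> S" "rect_simplicial (Mones k) S p"
    | "S \<noteq> {}" "\<forall>p\<in>S. \<not> rect_simplicial (Mones k) S p"
    by blast
  then show ?case
  proof cases
    case 1
    then show ?thesis unfolding colouring_def by simp
  next
    case (2 p)
    have "card (S - {p}) < card S" using 2 fin by (intro psubset_card_mono) auto
    moreover have "S - {p} \<subseteq> Mones k" "\<not> Mhole k \<subseteq> S - {p}" using less.prems by blast+
    ultimately obtain f where
      "colouring (S - {p}) (rect_edge (Mones k)) (clique_num (S - {p}) (rect_edge (Mones k))) f"
      using less.hyps by blast
    then show ?thesis using colouring_if_rect_simplicial[OF fin 2] by blast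
  next
    case 3
    from no_simplicial_cases[OF less.prems 3] show ?thesis by (rule optimal_colouring_cases)
  qed
qed

text \<open>The hole traversed as a cycle: (1,1), (1,2), (2,2), ..., (n-2,n-1), (n,n-1), (n-1,n), (n-1,1).\<close>

definition hole_seq :: "nat \<Rightarrow> nat \<Rightarrow> nat \<times> nat" where
  "hole_seq k j = (if j < 2*k+4 then (j div 2 + 1, j div 2 + 1 + j mod 2)
             else if j = 2*k+4 then (k+4,k+3) else if j = 2*k+5 then (k+3,k+4) else (k+3,1))"

lemma hole_seq_in: "j \<le> 2*k+6 \<Longrightarrow> hole_seq k j \<in> Mhole k"
proof -
  assume j: "j \<le> 2*k+6"
  show ?thesis
  proof (cases "j < 2*k+4")
    case True
    obtain i where "j = 2*i \<or> j = 2*i+1" by (metis dvd_mult_div_cancel mod_eq_0_iff_dvd odd_two_times_div_two_succ)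
    then show ?thesis using True unfolding hole_seq_def Mhole_def Mones_def by auto
  next
    case False
    then show ?thesis using j unfolding hole_seq_def Mhole_def Mones_def by auto
  qed
qed

lemma hole_seq_onto: "p \<in> Mhole k \<Longrightarrow> \<exists>j\<le>2*k+6. hole_seq k j = p"
proof -
  assume p: "p \<in> Mhole k"
  obtain a b where ab: "p = (a,b)" by (cases p)
  have "(1 \<le> a \<and> a \<le> k+2 \<and> b = a) \<or> (1 \<le> a \<and> a \<le> k+2 \<and> b = Suc a) \<or> (a = k+3 \<and> b = 1) \<or>
        (a = k+3 \<and> b = k+4) \<or> (a = k+4 \<and> b = k+3)"
    using p ab unfolding Mhole_def Mones_def by auto
  then show ?thesis
  proof (elim disjE conjE)
    assume h: "1 \<le> a" "a \<le> k+2" "b = a"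
    have "hole_seq k (2*(a-1)) = p" using h ab unfolding hole_seq_def by auto
    then show ?thesis using h by (intro exI[of _ "2*(a-1)"]) auto
  next
    assume h: "1 \<le> a" "a \<le> k+2" "b = Suc a"
    have "hole_seq k (2*(a-1)+1) = p" using h ab unfolding hole_seq_def by auto
    then show ?thesis using h by (intro exI[of _ "2*(a-1)+1"]) auto
  next
    assume h: "a = k+3" "b = 1"
    have "hole_seq k (2*k+6) = p" using h ab unfolding hole_seq_def by auto
    then show ?thesis by (intro exI[of _ "2*k+6"]) auto
  next
    assume h: "a = k+3" "b = k+4"
    have "hole_seq k (2*k+5) = p" using h ab unfolding hole_seq_def by auto
    then show ?thesis by (intro exI[of _ "2*k+5"]) auto
  next
    assume h: "a = k+4" "b = k+3"
    have "hole_seq k (2*k+4) = p" using h ab unfolding hole_seq_def by auto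
    then show ?thesis by (intro exI[of _ "2*k+4"]) auto
  qed
qed

lemma inj_on_hole_seq: "inj_on (hole_seq k) {..2*k+6}"
proof (rule inj_onI)
  fix i j assume ij: "i \<in> {..2*k+6}" "j \<in> {..2*k+6}" "hole_seq k i = hole_seq k j"
  show "i = j"
  proof (cases "i < 2*k+4")
    case True
    show ?thesis
    proof (cases "j < 2*k+4")
      case True
      then have "i div 2 = j div 2" "i mod 2 = j mod 2" using ij(3) \<open>i < 2*k+4\<close> unfolding hole_seq_def by auto
      then show ?thesis by (metis div_mult_mod_eq)
    next
      case False
      then show ?thesis using ij True unfolding hole_seq_def by (auto split: if_splits)
    qed
  next
    case False
    then show ?thesis using ij unfolding hole_seq_def by (auto split: if_splits)
  qed
qed

lemma Mhole_eq_image: "Mhole k = hole_seq k ` {..2*k+6}"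
proof
  show "Mhole k \<subseteq> hole_seq k ` {..2*k+6}"
  proof
    fix p assume "p \<in> Mhole k"
    then obtain j where "j \<le> 2*k+6" "hole_seq k j = p" using hole_seq_onto by blast
    then show "p \<in> hole_seq k ` {..2*k+6}" by force
  qed
  show "hole_seq k ` {..2*k+6} \<subseteq> Mhole k" using hole_seq_in by auto
qed

lemma card_Mhole: "card (Mhole k) = 2*k+7"
  using card_image[OF inj_on_hole_seq[of k]] Mhole_eq_image[of k] by simp

lemma hole_seq_rect_adj: "j < 2*k+6 \<Longrightarrow> rect_adj (Mones k) (hole_seq k j) (hole_seq k (Suc j))"
proof -
  assume j: "j < 2*k+6"
  obtain i where i: "j = 2*i \<or> j = 2*i+1" by (metis dvd_mult_div_cancel mod_eq_0_iff_dvd odd_two_times_div_two_succ)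
  consider "j < 2*k+3" | "j = 2*k+3" | "j = 2*k+4" | "j = 2*k+5" using j by linarith
  then show ?thesis
  proof cases
    case 1
    then show ?thesis using i unfolding hole_seq_def rect_adj_def Mones_def by auto
  next
    case 2
    then show ?thesis unfolding hole_seq_def rect_adj_def Mones_def by auto
  next
    case 3
    then show ?thesis unfolding hole_seq_def rect_adj_def Mones_def by auto
  next
    case 4
    then show ?thesis unfolding hole_seq_def rect_adj_def Mones_def by auto
  qed
qed

lemma hole_seq_rect_adj_wrap: "rect_adj (Mones k) (hole_seq k (2*k+6)) (hole_seq k 0)"
  unfolding hole_seq_def rect_adj_def Mones_def by auto

lemma hole_seq_neq: "j < 2*k+6 \<Longrightarrow> hole_seq k j \<noteq> hole_seq k (Suc j)"
  using inj_on_hole_seq[of k] unfolding inj_on_def by (metis Suc_n_not_n atMost_iff less_eq_Suc_le nat_less_le)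

lemma hole_seq_neq_wrap: "hole_seq k (2*k+6) \<noteq> hole_seq k 0"
  using inj_on_hole_seq[of k] unfolding inj_on_def by (metis atMost_iff le0 order_refl add_is_0 zero_neq_numeral)

lemma two_by_two_in_corner:
  assumes "a \<noteq> a'" "b \<noteq> b'" "(a,b) \<in> Mones k" "(a,b') \<in> Mones k" "(a',b) \<in> Mones k" "(a',b') \<in> Mones k"
  shows "k+3 \<le> a \<and> k+3 \<le> b"
proof -
  consider "1 \<le> a \<and> a \<le> k+2" | "a = k+3" | "a = k+4" using Mones_row_cases[OF assms(3)] by blast
  note ca = this
  consider "1 \<le> a' \<and> a' \<le> k+2" | "a' = k+3" | "a' = k+4" using Mones_row_cases[OF assms(5)] by blast
  note ca' = this
  show ?thesis
  proof (cases rule: ca)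
    case 1
    show ?thesis
    proof (cases rule: ca')
      case 1
      then show ?thesis using Mones_row_low[of a k b] Mones_row_low[of a k b'] Mones_row_low[of a' k b] Mones_row_low[of a' k b'] assms \<open>1 \<le> a \<and> a \<le> k+2\<close> by linarith
    next
      case 2
      then show ?thesis using Mones_row_low[of a k b] Mones_row_low[of a k b'] Mones_row_k3[of k b] Mones_row_k3[of k b'] assms \<open>1 \<le> a \<and> a \<le> k+2\<close> by auto
    next
      case 3
      then show ?thesis using Mones_row_low[of a k b] Mones_row_low[of a k b'] Mones_row_k4[of k b] Mones_row_k4[of k b'] assms \<open>1 \<le> a \<and> a \<le> k+2\<close> by auto
    qed
  next
    case 2
    show ?thesis
    proof (cases rule: ca')
      case 1
      then show ?thesis using Mones_row_low[of a' k b] Mones_row_low[of a' k b'] Mones_row_k3[of k b] Mones_row_k3[of k b'] assms \<open>a = k+3\<close> by auto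
    next
      case 2
      then show ?thesis using assms \<open>a = k+3\<close> by simp
    next
      case 3
      then show ?thesis using Mones_row_k4[of k b] assms \<open>a = k+3\<close> by auto
    qed
  next
    case 3
    then show ?thesis using Mones_row_k4[of k b] assms by auto
  qed
qed

lemma Mhole_row: "\<exists>c1 c2. {b. (r,b) \<in> Mhole k} \<subseteq> {c1,c2}"
proof -
  consider "1 \<le> r \<and> r \<le> k+2" | "r = k+3" | "r = k+4" | "\<not> (1 \<le> r \<and> r \<le> k+4)" by linarith
  then show ?thesis
  proof cases
    case 1 then show ?thesis by (intro exI[of _ r] exI[of _ "Suc r"]) (auto simp: Mhole_def Mones_def)
  next
    case 2 then show ?thesis by (intro exI[of _ 1] exI[of _ "k+4"]) (auto simp: Mhole_def Mones_def)
  next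
    case 3 then show ?thesis by (intro exI[of _ "k+3"] exI[of _ "k+3"]) (auto simp: Mhole_def Mones_def)
  next
    case 4 then show ?thesis by (intro exI[of _ 0] exI[of _ 0]) (auto simp: Mhole_def Mones_def)
  qed
qed

lemma Mhole_col: "\<exists>c1 c2. {a. (a,c) \<in> Mhole k} \<subseteq> {c1,c2}"
proof -
  consider "c = 1" | "2 \<le> c \<and> c \<le> k+2" | "c = k+3" | "c = k+4" | "\<not> (1 \<le> c \<and> c \<le> k+4)" by linarith
  then show ?thesis
  proof cases
    case 1 then show ?thesis by (intro exI[of _ 1] exI[of _ "k+3"]) (auto simp: Mhole_def Mones_def)
  next
    case 2 then show ?thesis by (intro exI[of _ "c-1"] exI[of _ c]) (auto simp: Mhole_def Mones_def)
  next
    case 3 then show ?thesis by (intro exI[of _ "k+2"] exI[of _ "k+4"]) (auto simp: Mhole_def Mones_def)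
  next
    case 4 then show ?thesis by (intro exI[of _ "k+3"] exI[of _ "k+3"]) (auto simp: Mhole_def Mones_def)
  next
    case 5 then show ?thesis by (intro exI[of _ 0] exI[of _ 0]) (auto simp: Mhole_def Mones_def)
  qed
qed

lemma card_Mhole_row: "card (Mhole k \<inter> {r} \<times> UNIV) \<le> 2"
proof -
  obtain c1 c2 where "{b. (r,b) \<in> Mhole k} \<subseteq> {c1,c2}" using Mhole_row by blast
  then have "card (Mhole k \<inter> {r} \<times> UNIV) \<le> card {(r,c1), (r,c2)}" by (intro card_mono) auto
  also have "\<dots> \<le> 2" by (simp add: card_insert_if)
  finally show ?thesis .
qed

lemma card_Mhole_col: "card (Mhole k \<inter> UNIV \<times> {c}) \<le> 2"
proof -
  obtain c1 c2 where "{a. (a,c) \<in> Mhole k} \<subseteq> {c1,c2}" using Mhole_col by blast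
  then have "card (Mhole k \<inter> UNIV \<times> {c}) \<le> card {(c1,c), (c2,c)}" by (intro card_mono) auto
  also have "\<dots> \<le> 2" by (simp add: card_insert_if)
  finally show ?thesis .
qed

lemma Mhole_in_two_by_two:
  assumes "(a,b) \<in> Mhole k" "a \<noteq> a'" "b \<noteq> b'" "(a,b') \<in> Mones k" "(a',b) \<in> Mones k" "(a',b') \<in> Mones k"
  shows "(a,b) \<in> {(k+3,k+4), (k+4,k+3)}"
proof -
  have ab: "(a,b) \<in> Mones k" using assms(1) by (simp add: Mhole_def)
  have "k+3 \<le> a \<and> k+3 \<le> b" using two_by_two_in_corner[OF assms(2,3) ab assms(4-6)] .
  then have "(a,b) \<in> {(k+3,k+3), (k+3,k+4), (k+4,k+3), (k+4,k+4)}"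
    using Mones_cases[OF ab] by auto
  then show ?thesis using assms(1) by (auto simp: Mhole_def)
qed

text \<open>Within one row or one column the hole has at most two positions, and a rectangle
  spanning two rows and two columns lies in the bottom-right 2 x 2 block.\<close>

lemma card_rect_Mhole_le_2:
  assumes "I \<times> J \<subseteq> Mones k"
  shows "card (I \<times> J \<inter> Mhole k) \<le> 2"
proof -
  let ?P = "I \<times> J \<inter> Mhole k"
  show ?thesis
  proof (cases "\<exists>r. ?P \<subseteq> {r} \<times> UNIV")
    case True
    then obtain r where "?P \<subseteq> Mhole k \<inter> {r} \<times> UNIV" by blast
    then have "card ?P \<le> card (Mhole k \<inter> {r} \<times> UNIV)" using finite_Mhole by (intro card_mono) auto
    then show ?thesis using card_Mhole_row[of k r] by linarith
  next
    case not_row: False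
    show ?thesis
    proof (cases "\<exists>c. ?P \<subseteq> UNIV \<times> {c}")
      case True
      then obtain c where "?P \<subseteq> Mhole k \<inter> UNIV \<times> {c}" by blast
      then have "card ?P \<le> card (Mhole k \<inter> UNIV \<times> {c})" using finite_Mhole by (intro card_mono) auto
      then show ?thesis using card_Mhole_col[of k c] by linarith
    next
      case not_col: False
      have "?P \<subseteq> {(k+3,k+4), (k+4,k+3)}"
      proof
        fix t assume t: "t \<in> ?P"
        obtain a b where ab: "t = (a,b)" by (cases t)
        have "\<not> ?P \<subseteq> {a} \<times> UNIV" "\<not> ?P \<subseteq> UNIV \<times> {b}" using not_row not_col by blast+
        then obtain a' b' a'' b'' where "(a',b') \<in> ?P" "a' \<noteq> a" "(a'',b'') \<in> ?P" "b'' \<noteq> b"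
          by auto
        then have "a \<noteq> a'" "b \<noteq> b''" "(a,b'') \<in> Mones k" "(a',b) \<in> Mones k" "(a',b'') \<in> Mones k"
          using t ab assms by auto
        then show "t \<in> {(k+3,k+4), (k+4,k+3)}"
          using Mhole_in_two_by_two[of a b k a' b''] t ab by blast
      qed
      then have "card ?P \<le> card {(k+3,k+4), (k+4,k+3)}" by (intro card_mono) auto
      then show ?thesis by (simp add: card_insert_if)
    qed
  qed
qed

lemma card_clique_Mhole_le_2:
  assumes "K \<subseteq> Mhole k" "is_clique K (rect_edge (Mones k))"
  shows "card K \<le> 2"
proof -
  have KV: "K \<subseteq> Mones k" using assms(1) by (auto simp: Mhole_def)
  have "fst ` K \<times> snd ` K \<subseteq> Mones k"
  proof
    fix z assume "z \<in> fst ` K \<times> snd ` K"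
    then obtain p q where pq: "p \<in> K" "q \<in> K" "z = (fst p, snd q)" by auto
    show "z \<in> Mones k"
    proof (cases "p = q")
      case True then show ?thesis using pq KV by auto
    next
      case False
      then have "rect_adj (Mones k) p q" using assms(2) pq unfolding is_clique_def rect_edge_def by blast
      then show ?thesis using pq by (simp add: rect_adj_def)
    qed
  qed
  then have "card (fst ` K \<times> snd ` K \<inter> Mhole k) \<le> 2" by (rule card_rect_Mhole_le_2)
  moreover have "K \<subseteq> fst ` K \<times> snd ` K \<inter> Mhole k" using assms(1) by force
  moreover have "finite (fst ` K \<times> snd ` K \<inter> Mhole k)" using finite_Mhole by blast
  ultimately show ?thesis using card_mono by (metis le_trans)
qed

lemma Mhole_not_2_colourable: "\<not> colouring (Mhole k) (rect_edge (Mones k)) 2 f"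
proof
  assume col: "colouring (Mhole k) (rect_edge (Mones k)) 2 f"
  have lt: "f (hole_seq k j) < 2" if "j \<le> 2*k+6" for j using col hole_seq_in[OF that] unfolding colouring_def by blast
  have df: "f (hole_seq k j) \<noteq> f (hole_seq k (Suc j))" if "j < 2*k+6" for j
    using col hole_seq_in[of j k] hole_seq_in[of "Suc j" k] that hole_seq_rect_adj[OF that] hole_seq_neq[OF that]
    unfolding colouring_def rect_edge_def by auto
  have par: "j \<le> 2*k+6 \<Longrightarrow> f (hole_seq k j) = (f (hole_seq k 0) + j) mod 2" for j
  proof (induction j)
    case 0 then show ?case using lt[of 0] by simp
  next
    case (Suc j)
    then have "f (hole_seq k j) = (f (hole_seq k 0) + j) mod 2" by (simp add: Suc.IH)
    moreover have "f (hole_seq k (Suc j)) < 2" using lt Suc by blast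
    moreover have "f (hole_seq k j) \<noteq> f (hole_seq k (Suc j))" using Suc.prems by (intro df) linarith
    ultimately show ?case by presburger
  qed
  have "f (hole_seq k (2*k+6)) = f (hole_seq k 0)" using par[of "2*k+6"] lt[of 0] by presburger
  moreover have "f (hole_seq k (2*k+6)) \<noteq> f (hole_seq k 0)"
    using col hole_seq_in[of "2*k+6" k] hole_seq_in[of 0 k] hole_seq_rect_adj_wrap[of k] hole_seq_neq_wrap[of k]
    unfolding colouring_def rect_edge_def by auto
  ultimately show False by simp
qed

lemma inj_on_Suc_mod: "inj_on (\<lambda>j. Suc j mod (2*k+7)) {..2*k+6}"
proof (rule inj_onI)
  fix i j assume ij: "i \<in> {..2*k+6}" "j \<in> {..2*k+6}" "Suc i mod (2*k+7) = Suc j mod (2*k+7)"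
  have mi: "Suc i mod (2*k+7) = (if i = 2*k+6 then 0 else Suc i)" using ij(1) by (auto simp: add.commute)
  have mj: "Suc j mod (2*k+7) = (if j = 2*k+6 then 0 else Suc j)" using ij(2) by (auto simp: add.commute)
  show "i = j" using ij(3) mi mj by (auto split: if_splits)
qed

text \<open>An independent T never contains two cyclically consecutive hole positions, so T and its
  image under the cyclic successor are disjoint subsets of the first B + 2 indices.\<close>

lemma card_independent_Mhole:
  assumes "T \<subseteq> Mhole k" "rect_independent (Mones k) T"
    "\<forall>j\<le>2*k+6. hole_seq k j \<in> T \<longrightarrow> j \<le> B" "B \<le> 2*k+6"
  shows "2 * card T \<le> min (B+1) (2*k+6) + 1"
proof -
  let ?K = "{j. j \<le> B \<and> hole_seq k j \<in> T}"
  let ?s = "\<lambda>j. Suc j mod (2*k+7)"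
  let ?M = "min (B+1) (2*k+6)"
  have TK: "T = hole_seq k ` ?K"
  proof
    show "T \<subseteq> hole_seq k ` ?K"
    proof
      fix p assume p: "p \<in> T"
      then obtain j where j: "j \<le> 2*k+6" "hole_seq k j = p" using assms(1) hole_seq_onto by blast
      then have "j \<le> B" using assms(3) p by blast
      then show "p \<in> hole_seq k ` ?K" using j p by blast
    qed
  qed auto
  have Ksub: "?K \<subseteq> {..2*k+6}" using assms(4) by auto
  have cT: "card T = card ?K" using TK card_image[OF inj_on_subset[OF inj_on_hole_seq Ksub]] by simp
  have fK: "finite ?K" by simp
  have disj: "?K \<inter> ?s ` ?K = {}"
  proof (rule ccontr)
    assume "?K \<inter> ?s ` ?K \<noteq> {}"
    then obtain j where j: "j \<in> ?K" "?s j \<in> ?K" by blast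
    show False
    proof (cases "j = 2*k+6")
      case True
      then have "?s j = 0" by (simp add: add.commute)
      then have "hole_seq k 0 \<in> T" "hole_seq k (2*k+6) \<in> T" using j True by auto
      then show False using assms(2) unfolding rect_independent_def using hole_seq_rect_adj_wrap[of k] hole_seq_neq_wrap[of k] by blast
    next
      case False
      then have jl: "j < 2*k+6" using j Ksub by auto
      then have "?s j = Suc j" by simp
      then have "hole_seq k (Suc j) \<in> T" "hole_seq k j \<in> T" using j by auto
      then show False using assms(2) unfolding rect_independent_def using hole_seq_rect_adj[OF jl] hole_seq_neq[OF jl] by blast
    qed
  qed
  have U: "?K \<union> ?s ` ?K \<subseteq> {..?M}"
  proof
    fix i assume "i \<in> ?K \<union> ?s ` ?K"
    then show "i \<in> {..?M}"
    proof
      assume "i \<in> ?K" then show ?thesis using assms(4) by auto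
    next
      assume "i \<in> ?s ` ?K"
      then obtain j where j: "j \<le> B" "i = ?s j" by blast
      show ?thesis
      proof (cases "j = 2*k+6")
        case True then show ?thesis using j by (simp add: add.commute)
      next
        case False then have "i = Suc j" using j assms(4) by simp
        then show ?thesis using j assms(4) False by simp
      qed
    qed
  qed
  have "card (?s ` ?K) = card ?K" using card_image[OF inj_on_subset[OF inj_on_Suc_mod Ksub]] .
  then have "card (?K \<union> ?s ` ?K) = 2 * card ?K" using card_Un_disjoint[OF fK finite_imageI[OF fK] disj] by simp
  moreover have "card (?K \<union> ?s ` ?K) \<le> ?M + 1" using card_mono[OF _ U] by simp
  ultimately show ?thesis using cT by simp
qed

text \<open>Position (n-1,n-1) is adjacent to the last four positions of the cycle, so next to it
  only a path of 2n - 5 hole positions remains.\<close>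

lemma card_independent_le:
  assumes "T \<subseteq> Mones k - {(k+4,k+4)}" "rect_independent (Mones k) T"
  shows "card T \<le> k+3"
proof (cases "(k+3,k+3) \<in> T")
  case False
  then have "T \<subseteq> Mhole k" using assms(1) by (auto simp: Mhole_def)
  then have "2 * card T \<le> min (2*k+6+1) (2*k+6) + 1" using card_independent_Mhole[of T k "2*k+6"] assms(2) by auto
  then show ?thesis by simp
next
  case True
  let ?T = "T - {(k+3,k+3)}"
  have T1: "?T \<subseteq> Mhole k" using assms(1) by (auto simp: Mhole_def)
  have ind: "rect_independent (Mones k) ?T" using assms(2) unfolding rect_independent_def by blast
  have h3: "hole_seq k (2*k+3) = (k+2,k+3)"
  proof -
    have "(2*k+3) div 2 = k+1" "(2*k+3) mod 2 = 1" by presburger+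
    then show ?thesis unfolding hole_seq_def by simp
  qed
  have h4: "hole_seq k (2*k+4) = (k+4,k+3)" unfolding hole_seq_def by simp
  have h5: "hole_seq k (2*k+5) = (k+3,k+4)" unfolding hole_seq_def by simp
  have h6: "hole_seq k (2*k+6) = (k+3,1)" unfolding hole_seq_def by simp
  have w: "rect_adj (Mones k) (k+3,k+3) (hole_seq k j)" if "2*k+3 \<le> j" "j \<le> 2*k+6" for j
  proof -
    have "j = 2*k+3 \<or> j = 2*k+4 \<or> j = 2*k+5 \<or> j = 2*k+6" using that by presburger
    moreover have "rect_adj (Mones k) (k+3,k+3) (k+2,k+3)" "rect_adj (Mones k) (k+3,k+3) (k+4,k+3)"
      "rect_adj (Mones k) (k+3,k+3) (k+3,k+4)" "rect_adj (Mones k) (k+3,k+3) (k+3,1)"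
      by (simp_all add: rect_adj_def Mones_def)
    ultimately show ?thesis using h3 h4 h5 h6 by auto
  qed
  have jb: "\<forall>j\<le>2*k+6. hole_seq k j \<in> ?T \<longrightarrow> j \<le> 2*k+2"
  proof (intro allI impI)
    fix j assume j: "j \<le> 2*k+6" "hole_seq k j \<in> ?T"
    show "j \<le> 2*k+2"
    proof (rule ccontr)
      assume "\<not> j \<le> 2*k+2"
      then have "rect_adj (Mones k) (k+3,k+3) (hole_seq k j)" using w j by simp
      moreover have ne: "(k+3,k+3) \<noteq> hole_seq k j" using j by auto
      moreover have hT: "hole_seq k j \<in> T" using j by blast
      ultimately show False using assms(2) True hT ne unfolding rect_independent_def by blast
    qed
  qed
  have "2*k+2 \<le> 2*k+6" by simp
  from card_independent_Mhole[OF T1 ind jb this] have "2 * card ?T \<le> min (2*k+2+1) (2*k+6) + 1" .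
  then have "card ?T \<le> k+2" by simp
  moreover have "finite T" using assms(1) finite_Mones finite_subset by blast
  ultimately show ?thesis using True by (simp add: card_Diff_singleton)
qed

lemma card_cover_Mhole:
  assumes "finite F" "\<forall>(I,J)\<in>F. I \<times> J \<subseteq> Mones k" "Mhole k \<subseteq> (\<Union>(I,J)\<in>F. I \<times> J)"
  shows "2*k+7 \<le> 2 * card F"
proof -
  have "Mhole k \<subseteq> (\<Union>Q\<in>F. fst Q \<times> snd Q \<inter> Mhole k)" using assms(3) by force
  then have "card (Mhole k) \<le> card (\<Union>Q\<in>F. fst Q \<times> snd Q \<inter> Mhole k)"
    using assms(1) finite_Mhole by (intro card_mono) auto
  also have "\<dots> \<le> (\<Sum>Q\<in>F. card (fst Q \<times> snd Q \<inter> Mhole k))" using card_UN_le[OF assms(1)] .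
  also have "\<dots> \<le> (\<Sum>Q\<in>F. 2)"
  proof (rule sum_mono)
    fix Q assume Q: "Q \<in> F"
    obtain I J where IJ: "Q = (I,J)" by (cases Q)
    then have "fst Q \<times> snd Q \<subseteq> Mones k" using assms(2) Q by auto
    then show "card (fst Q \<times> snd Q \<inter> Mhole k) \<le> 2" by (rule card_rect_Mhole_le_2)
  qed
  finally show ?thesis using card_Mhole by simp
qed

lemma Mmat_eq: "Mmat (k+4) i j = (if (i,j) \<in> Mones k then One else Zero)"
  unfolding Mmat_def Cmat_def Mones_def by auto

lemma qmark_Mmat_eq:
  "qmark (Mmat (k+4)) {(k+4,k+4)} i j =
     (if (i,j) = (k+4,k+4) then Qm else if (i,j) \<in> Mones k then One else Zero)"
  unfolding qmark_def Mmat_eq by simp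

lemma nonzero_Mmat: "nonzero (Mmat (k+4)) = Mones k"
  by (auto simp: nonzero_def Mmat_eq)

lemma nonzero_qmark_Mmat: "nonzero (qmark (Mmat (k+4)) {(k+4,k+4)}) = Mones k"
  by (auto simp: nonzero_def qmark_Mmat_eq Mones_def)

lemma supp_Mmat: "supp R C (Mmat (k+4)) = Mones k \<inter> R \<times> C"
  by (auto simp: supp_def Mmat_eq)

lemma supp_qmark_Mmat:
  "supp R C (qmark (Mmat (k+4)) {(k+4,k+4)}) = (Mones k - {(k+4,k+4)}) \<inter> R \<times> C"
  by (auto simp: supp_def qmark_Mmat_eq)

lemma Mhole_subset_full: "Mhole k \<subseteq> {1..k+4} \<times> {1..k+4}"
  by (auto simp: Mhole_def Mones_def)

lemma Mhole_subset_Times_full: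
  assumes "Mhole k \<subseteq> R \<times> C"
  shows "{1..k+4} \<subseteq> R \<and> {1..k+4} \<subseteq> C"
proof (intro conjI subsetI)
  fix a assume a: "a \<in> {1..k+4}"
  consider "a \<le> k+2" | "a = k+3" | "a = k+4" using a by fastforce
  then have "\<exists>b. (a,b) \<in> Mhole k"
  proof cases
    case 1 then show ?thesis using a by (intro exI[of _ a]) (auto simp: Mhole_def Mones_def)
  next
    case 2 then show ?thesis by (intro exI[of _ 1]) (auto simp: Mhole_def Mones_def)
  next
    case 3 then show ?thesis by (intro exI[of _ "k+3"]) (auto simp: Mhole_def Mones_def)
  qed
  then show "a \<in> R" using assms by blast
next
  fix b assume b: "b \<in> {1..k+4}"
  consider "b \<le> k+2" | "b = k+3" | "b = k+4" using b by fastforce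
  then have "\<exists>a. (a,b) \<in> Mhole k"
  proof cases
    case 1 then show ?thesis using b by (intro exI[of _ b]) (auto simp: Mhole_def Mones_def)
  next
    case 2 then show ?thesis by (intro exI[of _ "k+4"]) (auto simp: Mhole_def Mones_def)
  next
    case 3 then show ?thesis by (intro exI[of _ "k+3"]) (auto simp: Mhole_def Mones_def)
  qed
  then show "b \<in> C" using assms by blast
qed

lemma proper_submatrix_not_Mhole:
  assumes "R \<subseteq> {1..k+4}" "C \<subseteq> {1..k+4}" "(R, C) \<noteq> ({1..k+4}, {1..k+4})"
  shows "\<not> Mhole k \<subseteq> R \<times> C"
  using Mhole_subset_Times_full[of k R C] assms by blast

lemma corner_rect_adj: "rect_adj (Mones k) (k+4,k+4) q \<Longrightarrow> q \<in> {k+3,k+4} \<times> {k+3,k+4}"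
  using Mones_row_k4[of k "snd q"] Mones_col_k4[of "fst q" k] by (cases q) (auto simp: rect_adj_def)

lemma tight_supp_Mmat:
  assumes "R \<subseteq> {1..k+4}" "C \<subseteq> {1..k+4}"
  shows "tight (Mones k) (Mones k \<inter> R \<times> C)"
proof (cases "(k+4,k+4) \<in> R \<times> C")
  case True
  let ?S = "Mones k \<inter> R \<times> C"
  let ?B = "{k+3,k+4} \<times> {k+3,k+4}"
  have "(k+3,k+4) \<in> Mhole k" by (simp add: Mhole_def Mones_def)
  then have "tight (Mones k) (?S - ?B)" by (intro tight_if_not_hole) auto
  moreover have "(k+4,k+4) \<in> ?S" using True by (simp add: Mones_def)
  moreover have "finite ?S" using finite_Mones by blast
  ultimately show ?thesis
    using tight_if_simplicial[OF _ _ corner_block_subset, of ?S "(k+4,k+4)"] corner_rect_adj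
    by blast
next
  case False
  then have "(R, C) \<noteq> ({1..k+4}, {1..k+4})" by auto
  then have "\<not> Mhole k \<subseteq> R \<times> C" by (rule proper_submatrix_not_Mhole[OF assms])
  then show ?thesis by (intro tight_if_not_hole) auto
qed

lemma firm_Mmat: "firm {1..k+4} {1..k+4} (Mmat (k+4))"
  unfolding firm_def
proof (intro allI impI)
  fix R C assume RC: "R \<subseteq> {1..k+4}" "C \<subseteq> {1..k+4}"
  then have "finite R" "finite C" using finite_subset by blast+
  then show "iso_num R C (Mmat (k+4)) = br R C (Mmat (k+4))"
    using iso_num_eq_br_if_tight tight_supp_Mmat[OF RC] by (simp add: nonzero_Mmat supp_Mmat)
qed

lemma iso_num_qmark_Mmat_le: "iso_num {1..k+4} {1..k+4} (qmark (Mmat (k+4)) {(k+4,k+4)}) \<le> k+3"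
proof -
  obtain T where T: "isolated {1..k+4} {1..k+4} (qmark (Mmat (k+4)) {(k+4,k+4)}) T"
    "iso_num {1..k+4} {1..k+4} (qmark (Mmat (k+4)) {(k+4,k+4)}) = card T"
    using iso_num_attained(1)[OF finite_atLeastAtMost finite_atLeastAtMost] by blast
  then have "T \<subseteq> Mones k - {(k+4,k+4)}" "rect_independent (Mones k) T"
    unfolding isolated_iff_rect_independent supp_qmark_Mmat nonzero_qmark_Mmat by blast+
  then show ?thesis using T(2) card_independent_le by simp
qed

lemma br_qmark_Mmat_ge: "k+4 \<le> br {1..k+4} {1..k+4} (qmark (Mmat (k+4)) {(k+4,k+4)})"
proof -
  let ?Q = "qmark (Mmat (k+4)) {(k+4,k+4)}"
  obtain F where F: "rect_cover {1..k+4} {1..k+4} ?Q F" "card F = br {1..k+4} {1..k+4} ?Q"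
    using br_attained(1)[OF finite_atLeastAtMost finite_atLeastAtMost] by blast
  have "\<forall>(I,J)\<in>F. I \<times> J \<subseteq> Mones k"
    using rect_cover_subset_nonzero[OF F(1)] nonzero_qmark_Mmat by blast
  moreover have "Mhole k \<subseteq> (\<Union>(I,J)\<in>F. I \<times> J)"
    using F(1) Mhole_subset_full[of k] unfolding rect_cover_def supp_qmark_Mmat Mhole_def by blast
  moreover have "finite F" using F(1) unfolding rect_cover_def by blast
  ultimately have "2*k+7 \<le> 2 * card F" using card_cover_Mhole by blast
  then show ?thesis using F(2) by linarith
qed

lemma min_non_firm_qmark_Mmat: "min_non_firm {1..k+4} {1..k+4} (qmark (Mmat (k+4)) {(k+4,k+4)})"
  unfolding min_non_firm_def
proof (intro conjI allI impI)
  show "iso_num {1..k+4} {1..k+4} (qmark (Mmat (k+4)) {(k+4,k+4)})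
      < br {1..k+4} {1..k+4} (qmark (Mmat (k+4)) {(k+4,k+4)})"
    using iso_num_qmark_Mmat_le[of k] br_qmark_Mmat_ge[of k] by linarith
  fix R C assume RC: "R \<subseteq> {1..k+4}" "C \<subseteq> {1..k+4}" "(R, C) \<noteq> ({1..k+4}, {1..k+4})"
  then have "finite R" "finite C" using finite_subset by blast+
  moreover have "tight (Mones k) ((Mones k - {(k+4,k+4)}) \<inter> R \<times> C)"
    using proper_submatrix_not_Mhole[OF RC] by (intro tight_if_not_hole) auto
  ultimately show "iso_num R C (qmark (Mmat (k+4)) {(k+4,k+4)}) = br R C (qmark (Mmat (k+4)) {(k+4,k+4)})"
    using iso_num_eq_br_if_tight by (simp add: nonzero_qmark_Mmat supp_qmark_Mmat)
qed

lemma superfirm_Mmat_proper: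
  assumes "R \<subseteq> {1..k+4}" "C \<subseteq> {1..k+4}" "(R, C) \<noteq> ({1..k+4}, {1..k+4})"
  shows "superfirm R C (Mmat (k+4))"
  unfolding superfirm_def perfect_def
proof (intro allI impI)
  fix W assume "W \<subseteq> supp R C (Mmat (k+4))"
  then have W: "W \<subseteq> Mones k" "W \<subseteq> R \<times> C" unfolding supp_Mmat by auto
  then have "finite W" using finite_Mones finite_subset by blast
  moreover have "\<not> Mhole k \<subseteq> W" using W(2) proper_submatrix_not_Mhole[OF assms] by blast
  then obtain g where "colouring W (rect_edge (Mones k)) (clique_num W (rect_edge (Mones k))) g"
    using optimal_colouring_if_not_hole W(1) by blast
  ultimately show "chrom_num W (rc_adj R C (Mmat (k+4))) = clique_num W (rc_adj R C (Mmat (k+4)))"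
    using chrom_num_eq_clique_num chrom_num_rc_adj[OF W(2)] clique_num_rc_adj[OF W(2)]
    by (simp add: nonzero_Mmat)
qed

lemma not_superfirm_Mmat: "\<not> superfirm {1..k+4} {1..k+4} (Mmat (k+4))"
proof -
  let ?E = "rc_adj {1..k+4} {1..k+4} (Mmat (k+4))"
  have hole: "Mhole k \<subseteq> supp {1..k+4} {1..k+4} (Mmat (k+4))"
    using Mhole_subset_full[of k] unfolding supp_Mmat Mhole_def by blast
  obtain K where K: "K \<subseteq> Mhole k" "is_clique K (rect_edge (Mones k))"
    "card K = clique_num (Mhole k) (rect_edge (Mones k))"
    using clique_num_attained(1)[OF finite_Mhole] by blast
  have "clique_num (Mhole k) ?E = clique_num (Mhole k) (rect_edge (Mones k))"
    using clique_num_rc_adj[OF Mhole_subset_full] by (simp add: nonzero_Mmat)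
  also have "\<dots> \<le> 2" using card_clique_Mhole_le_2[OF K(1,2)] K(3) by simp
  also have "\<dots> < chrom_num (Mhole k) (rect_edge (Mones k))"
    by (rule chrom_num_gt[OF finite_Mhole Mhole_not_2_colourable])
  also have "\<dots> = chrom_num (Mhole k) ?E"
    using chrom_num_rc_adj[OF Mhole_subset_full] by (simp add: nonzero_Mmat)
  finally show ?thesis using hole unfolding superfirm_def perfect_def by auto
qed

lemma min_non_superfirm_Mmat: "min_non_superfirm {1..k+4} {1..k+4} (Mmat (k+4))"
  unfolding min_non_superfirm_def using not_superfirm_Mmat superfirm_Mmat_proper by blast

theorem lemma8:
  fixes n :: nat
  assumes "n \<ge> 4"
  shows "firm {1..n} {1..n} (Mmat n) \<and> min_non_superfirm {1..n} {1..n} (Mmat n) \<and>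
         min_non_firm {1..n} {1..n} (qmark (Mmat n) {(n, n)})"
proof -
  obtain k where "n = k + 4" using assms by (metis add.commute le_add_diff_inverse)
  then show ?thesis using firm_Mmat min_non_superfirm_Mmat min_non_firm_qmark_Mmat by blast
qed

end
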